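(* Let $(\mathcal G,\lambda)$ be a small morphism-colored groupoid satisfying the inverse-compatibility condition. For $f,g\in\mathrm{Mor}(\mathcal G)$ with $(s_0\circ\lambda_0)(\mathrm{source}(f))=(s_0\circ\lambda_0)(\mathrm{target}(g))$, there exists a composable pair $(f',g')$ of morphisms of $\mathcal G$ (i.e. $\mathrm{source}(f')=\mathrm{target}(g')$) such that $(s_1\circ\lambda_1)(f)=(s_1\circ\lambda_1)(f')$ and $(s_1\circ\lambda_1)(g)=(s_1\circ\lambda_1)(g')$.
   Context: A morphism-colored category is a pair $(\mathcal C,\lambda)$ where $\mathcal C$ is a category and $\lambda$ assigns to each morphism $f$ a color $\lambda(f)$, such that: whenever $g,f_1,f_2$ with $(f_1,f_2)$ composable satisfy $\lambda(g)=\lambda(f_1\circ f_2)$, there exist composable $g_1,g_2$ with $g=g_1\circ g_2$, $\lambda(g_1)=\lambda(f_1)$, $\lambda(g_2)=\lambda(f_2)$. It is a morphism-colored groupoid if $\mathcal C$ is a groupoid, and small if $\mathcal C$ is small and $\lambda$ is a map into a set. Inverse-compatibility: $\lambda(f)=\lambda(g)$ implies $\lambda(f^{-1})=\lambda(g^{-1})$. $I_1=\lambda(\mathrm{Mor}(\mathcal G))$, $\lambda_1$ the corestriction of $\lambda$ to $I_1$; $I_0=\{\lambda(\mathrm{id}_x):x\in\mathrm{Obj}(\mathcal G)\}$, $\lambda_0(x)=\lambda(\mathrm{id}_x)$. The equivalence relation $\overset{1}{\sim}$ on $I_1$: $\lambda(f_1\circ\cdots\circ f_l)\overset{1}{\sim}\lambda(g_1\circ\cdots\circ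 g_l)$ for every $l\ge1$ and all composable sequences with $\lambda(f_i)=\lambda(g_i)$ for all $i$ (no other pairs); $s_1:I_1\to\bar I_1$ the quotient map. The equivalence relation $\overset{0}{\sim}$ on $I_0$: $\lambda_0(\mathrm{source}(f))\overset{0}{\sim}\lambda_0(\mathrm{source}(g))$ whenever $(s_1\circ\lambda_1)(f)=(s_1\circ\lambda_1)(g)$; $s_0:I_0\to\bar I_0$ the quotient map onto its classes. *)

theory Defs
  imports Main
begin

text \<open>A small category given by explicit carrier sets. comp g f is g \<circ> f,
  defined (meaningfully) when dom g = cod f.\<close>
record ('o, 'm) cat =
  Obj   :: "'o set"
  Mor   :: "'m set"
  dom   :: "'m \<Rightarrow> 'o"
  cod   :: "'m \<Rightarrow> 'o"
  comp  :: "'m \<Rightarrow> 'm \<Rightarrow> 'm"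
  ident :: "'o \<Rightarrow> 'm"

definition category :: "('o, 'm) cat \<Rightarrow> bool" where
  "category C \<longleftrightarrow>
     (\<forall>f\<in>Mor C. dom C f \<in> Obj C \<and> cod C f \<in> Obj C) \<and>
     (\<forall>x\<in>Obj C. ident C x \<in> Mor C \<and> dom C (ident C x) = x \<and> cod C (ident C x) = x) \<and>
     (\<forall>f\<in>Mor C. \<forall>g\<in>Mor C. dom C g = cod C f \<longrightarrow>
        comp C g f \<in> Mor C \<and> dom C (comp C g f) = dom C f \<and> cod C (comp C g f) = cod C g) \<and>
     (\<forall>f\<in>Mor C. \<forall>g\<in>Mor C. \<forall>h\<in>Mor C. dom C h = cod C g \<longrightarrow> dom C g = cod C f \<longrightarrow>
        comp C h (comp C g f) = comp C (comp C h g) f) \<and>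
     (\<forall>f\<in>Mor C. comp C (ident C (cod C f)) f = f \<and> comp C f (ident C (dom C f)) = f)"

definition is_inverse :: "('o, 'm) cat \<Rightarrow> 'm \<Rightarrow> 'm \<Rightarrow> bool" where
  "is_inverse C f g \<longleftrightarrow> g \<in> Mor C \<and> dom C g = cod C f \<and> cod C g = dom C f \<and>
     comp C g f = ident C (dom C f) \<and> comp C f g = ident C (cod C f)"

definition groupoid :: "('o, 'm) cat \<Rightarrow> bool" where
  "groupoid C \<longleftrightarrow> category C \<and> (\<forall>f\<in>Mor C. \<exists>g. is_inverse C f g)"

definition ginv :: "('o, 'm) cat \<Rightarrow> 'm \<Rightarrow> 'm" where
  "ginv C f = (SOME g. is_inverse C f g)"

definition morphism_colored :: "('o, 'm) cat \<Rightarrow> ('m \<Rightarrow> 'c) \<Rightarrow> bool" where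
  "morphism_colored C lam \<longleftrightarrow> category C \<and>
     (\<forall>g\<in>Mor C. \<forall>f1\<in>Mor C. \<forall>f2\<in>Mor C. dom C f1 = cod C f2 \<longrightarrow> lam g = lam (comp C f1 f2) \<longrightarrow>
        (\<exists>g1\<in>Mor C. \<exists>g2\<in>Mor C. dom C g1 = cod C g2 \<and> g = comp C g1 g2 \<and>
            lam g1 = lam f1 \<and> lam g2 = lam f2))"

definition morphism_colored_groupoid :: "('o, 'm) cat \<Rightarrow> ('m \<Rightarrow> 'c) \<Rightarrow> bool" where
  "morphism_colored_groupoid C lam \<longleftrightarrow> morphism_colored C lam \<and> groupoid C"

definition inverse_compatible :: "('o, 'm) cat \<Rightarrow> ('m \<Rightarrow> 'c) \<Rightarrow> bool" where
  "inverse_compatible C lam \<longleftrightarrow>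
     (\<forall>f\<in>Mor C. \<forall>g\<in>Mor C. lam f = lam g \<longrightarrow> lam (ginv C f) = lam (ginv C g))"

definition comp_seq :: "('o, 'm) cat \<Rightarrow> 'm list \<Rightarrow> bool" where
  "comp_seq C fs \<longleftrightarrow> fs \<noteq> [] \<and> set fs \<subseteq> Mor C \<and>
     (\<forall>i. Suc i < length fs \<longrightarrow> dom C (fs ! i) = cod C (fs ! Suc i))"

fun clist :: "('o, 'm) cat \<Rightarrow> 'm list \<Rightarrow> 'm" where
  "clist C [] = undefined"
| "clist C [f] = f"
| "clist C (f # g # fs) = comp C f (clist C (g # fs))"

definition I1 :: "('o, 'm) cat \<Rightarrow> ('m \<Rightarrow> 'c) \<Rightarrow> 'c set" where
  "I1 C lam = lam ` Mor C"

definition I0 :: "('o, 'm) cat \<Rightarrow> ('m \<Rightarrow> 'c) \<Rightarrow> 'c set" where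
  "I0 C lam = (\<lambda>x. lam (ident C x)) ` Obj C"

definition rel1_base :: "('o, 'm) cat \<Rightarrow> ('m \<Rightarrow> 'c) \<Rightarrow> 'c rel" where
  "rel1_base C lam = {(lam (clist C fs), lam (clist C gs)) | fs gs.
     comp_seq C fs \<and> comp_seq C gs \<and> length fs = length gs \<and>
     (\<forall>i<length fs. lam (fs ! i) = lam (gs ! i))}"

definition sim1 :: "('o, 'm) cat \<Rightarrow> ('m \<Rightarrow> 'c) \<Rightarrow> 'c rel" where
  "sim1 C lam = ((rel1_base C lam \<union> (rel1_base C lam)\<inverse>)\<^sup>* ) \<inter> (I1 C lam \<times> I1 C lam)"

definition s1 :: "('o, 'm) cat \<Rightarrow> ('m \<Rightarrow> 'c) \<Rightarrow> 'c \<Rightarrow> 'c set" where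
  "s1 C lam c = sim1 C lam `` {c}"

definition rel0_base :: "('o, 'm) cat \<Rightarrow> ('m \<Rightarrow> 'c) \<Rightarrow> 'c rel" where
  "rel0_base C lam = {(lam (ident C (dom C f)), lam (ident C (dom C g))) | f g.
     f \<in> Mor C \<and> g \<in> Mor C \<and> s1 C lam (lam f) = s1 C lam (lam g)}"

definition sim0 :: "('o, 'm) cat \<Rightarrow> ('m \<Rightarrow> 'c) \<Rightarrow> 'c rel" where
  "sim0 C lam = ((rel0_base C lam \<union> (rel0_base C lam)\<inverse>)\<^sup>* ) \<inter> (I0 C lam \<times> I0 C lam)"

definition s0 :: "('o, 'm) cat \<Rightarrow> ('m \<Rightarrow> 'c) \<Rightarrow> 'c \<Rightarrow> 'c set" where
  "s0 C lam c = sim0 C lam `` {c}"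

definition lam0 :: "('o, 'm) cat \<Rightarrow> ('m \<Rightarrow> 'c) \<Rightarrow> 'o \<Rightarrow> 'c" where
  "lam0 C lam x = lam (ident C x)"

end

theory Submission
  imports Defs
begin

text \<open>Call a predicate P on objects colour-stable if P (source m) implies P (source m')
  whenever m and m' have the same colour. A composite has the source of its last factor, and
  the generating pairs of ~1 compare composites whose factors have matching colours, so
  colour-stable predicates are invariant under ~1, and hence (an identity has its object as
  source) under ~0. The key point is that in an inverse-compatible morphism-colored groupoid
  "some morphism of colour class c ends here" is colour-stable: if g' ends at the source of m
  and lam m = lam m', the lifting property applied to m = (m \<circ> g') \<circ> g'\<inverse> factors
  m' = g1 \<circ> g2 with g2 coloured like g'\<inverse>, and by inverse compatibility g2\<inverse> ends at
  the source of m' with the colour of g'. Transporting the class of g from target g to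
  source f yields a g' composable with f.\<close>

lemma category_dom_cod_Obj:
  "category C \<Longrightarrow> f \<in> Mor C \<Longrightarrow> dom C f \<in> Obj C \<and> cod C f \<in> Obj C"
  unfolding category_def by blast

lemma category_ident:
  "category C \<Longrightarrow> x \<in> Obj C \<Longrightarrow> ident C x \<in> Mor C \<and> dom C (ident C x) = x \<and> cod C (ident C x) = x"
  unfolding category_def by blast

lemma category_comp:
  "category C \<Longrightarrow> f \<in> Mor C \<Longrightarrow> g \<in> Mor C \<Longrightarrow> dom C g = cod C f \<Longrightarrow>
     comp C g f \<in> Mor C \<and> dom C (comp C g f) = dom C f \<and> cod C (comp C g f) = cod C g"
  unfolding category_def by blast

lemma category_assoc:
  "category C \<Longrightarrow> f \<in> Mor C \<Longrightarrow> g \<in> Mor C \<Longrightarrow> h \<in> Mor C \<Longrightarrow>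
     dom C h = cod C g \<Longrightarrow> dom C g = cod C f \<Longrightarrow> comp C h (comp C g f) = comp C (comp C h g) f"
  unfolding category_def by blast

lemma category_ident_left_right:
  "category C \<Longrightarrow> f \<in> Mor C \<Longrightarrow> comp C (ident C (cod C f)) f = f \<and> comp C f (ident C (dom C f)) = f"
  unfolding category_def by blast

lemma groupoid_category: "groupoid C \<Longrightarrow> category C"
  unfolding groupoid_def by blast

lemma is_inverse_ginv: "groupoid C \<Longrightarrow> f \<in> Mor C \<Longrightarrow> is_inverse C f (ginv C f)"
  unfolding groupoid_def ginv_def by (metis someI_ex)

lemma is_inverse_sym: "is_inverse C f g \<Longrightarrow> f \<in> Mor C \<Longrightarrow> is_inverse C g f"
  unfolding is_inverse_def by simp

lemma is_inverse_unique:
  assumes C: "category C" and f: "f \<in> Mor C"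
    and g: "is_inverse C f g" and h: "is_inverse C f h"
  shows "g = h"
proof -
  have g_props: "g \<in> Mor C" "dom C g = cod C f" "comp C g f = ident C (dom C f)"
    and h_props: "h \<in> Mor C" "cod C h = dom C f" "comp C f h = ident C (cod C f)"
    using g h unfolding is_inverse_def by auto
  have "g = comp C g (comp C f h)"
    using category_ident_left_right[OF C g_props(1)] g_props(2) h_props(3) by simp
  also have "\<dots> = comp C (comp C g f) h"
    using category_assoc[OF C h_props(1) f g_props(1)] g_props(2) h_props(2) by simp
  also have "\<dots> = h"
    using category_ident_left_right[OF C h_props(1)] g_props(3) h_props(2) by simp
  finally show ?thesis .
qed

lemma ginv_ginv:
  assumes G: "groupoid C" and f: "f \<in> Mor C"
  shows "ginv C (ginv C f) = f"
proof -
  have "is_inverse C (ginv C f) f" "ginv C f \<in> Mor C"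
    using is_inverse_sym is_inverse_ginv[OF G f] f unfolding is_inverse_def by auto
  then show ?thesis
    using is_inverse_unique[OF groupoid_category[OF G]] is_inverse_ginv[OF G] by metis
qed

lemma comp_seq_Cons:
  "comp_seq C (f # g # fs) \<Longrightarrow> f \<in> Mor C \<and> dom C f = cod C g \<and> comp_seq C (g # fs)"
  unfolding comp_seq_def by (auto dest: spec[where x=0] spec[where x="Suc _"])

lemma clist_Mor_dom_cod:
  "category C \<Longrightarrow> comp_seq C fs \<Longrightarrow>
     clist C fs \<in> Mor C \<and> dom C (clist C fs) = dom C (last fs) \<and> cod C (clist C fs) = cod C (hd fs)"
proof (induction C fs rule: clist.induct)
  case (1 C)
  then show ?case by (simp add: comp_seq_def)
next
  case (2 C f)
  then show ?case by (simp add: comp_seq_def)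
next
  case (3 C f g fs)
  then show ?case
    using comp_seq_Cons[OF "3.prems"(2)] category_comp[OF "3.prems"(1), of "clist C (g # fs)" f]
    by auto
qed

lemma rtrancl_symcl_invariant:
  assumes "(a, b) \<in> (R \<union> R\<inverse>)\<^sup>*" "Q a"
    and "\<And>x y. (x, y) \<in> R \<Longrightarrow> Q x \<longleftrightarrow> Q y"
  shows "Q b"
  using assms(1,2) by (induction rule: rtrancl_induct) (use assms(3) in blast)+

definition colour_stable :: "('o, 'm) cat \<Rightarrow> ('m \<Rightarrow> 'c) \<Rightarrow> ('o \<Rightarrow> bool) \<Rightarrow> bool" where
  "colour_stable C lam P \<longleftrightarrow>
     (\<forall>m\<in>Mor C. \<forall>m'\<in>Mor C. lam m = lam m' \<longrightarrow> P (dom C m) \<longrightarrow> P (dom C m'))"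

lemma colour_stableD:
  "colour_stable C lam P \<Longrightarrow> m \<in> Mor C \<Longrightarrow> m' \<in> Mor C \<Longrightarrow> lam m = lam m' \<Longrightarrow>
     P (dom C m) \<longleftrightarrow> P (dom C m')"
  unfolding colour_stable_def by metis

lemma colour_stable_rel1_base:
  assumes C: "category C" and P: "colour_stable C lam P"
    and "(lam m, lam m') \<in> rel1_base C lam" and m: "m \<in> Mor C" and m': "m' \<in> Mor C"
  shows "P (dom C m) \<longleftrightarrow> P (dom C m')"
proof -
  obtain fs gs where fs: "comp_seq C fs" and gs: "comp_seq C gs"
    and len: "length fs = length gs" and colours: "\<forall>i<length fs. lam (fs ! i) = lam (gs ! i)"
    and "lam m = lam (clist C fs)" "lam m' = lam (clist C gs)"
    using assms(3) unfolding rel1_base_def by blast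
  moreover have "fs \<noteq> []" "gs \<noteq> []" "last fs \<in> Mor C" "last gs \<in> Mor C"
    using fs gs unfolding comp_seq_def by auto
  moreover from this have "lam (last fs) = lam (last gs)"
    using len colours by (simp add: last_conv_nth)
  ultimately show ?thesis
    using clist_Mor_dom_cod[OF C fs] clist_Mor_dom_cod[OF C gs] colour_stableD[OF P] m m' by metis
qed

lemma colour_stable_s1:
  assumes C: "category C" and P: "colour_stable C lam P"
    and a: "a \<in> Mor C" and b: "b \<in> Mor C" and ab: "s1 C lam (lam a) = s1 C lam (lam b)"
    and "P (dom C a)"
  shows "P (dom C b)"
proof -
  have "lam b \<in> s1 C lam (lam b)"
    using b unfolding s1_def sim1_def I1_def by auto
  then have "(lam a, lam b) \<in> (rel1_base C lam \<union> (rel1_base C lam)\<inverse>)\<^sup>*"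
    using ab unfolding s1_def sim1_def by auto
  moreover have "\<exists>m\<in>Mor C. lam m = lam a \<and> P (dom C m)"
    using a \<open>P (dom C a)\<close> by blast
  ultimately have "\<exists>m\<in>Mor C. lam m = lam b \<and> P (dom C m)"
  proof (rule rtrancl_symcl_invariant)
    fix x y assume "(x, y) \<in> rel1_base C lam"
    moreover from this obtain m m' where "m \<in> Mor C" "m' \<in> Mor C" "x = lam m" "y = lam m'"
      unfolding rel1_base_def using clist_Mor_dom_cod[OF C] by blast
    ultimately show "(\<exists>m\<in>Mor C. lam m = x \<and> P (dom C m)) \<longleftrightarrow> (\<exists>m\<in>Mor C. lam m = y \<and> P (dom C m))"
      using colour_stable_rel1_base[OF C P] colour_stableD[OF P] by metis
  qed
  then show ?thesis
    using colour_stableD[OF P] b by blast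
qed

lemma colour_stable_s0:
  assumes C: "category C" and P: "colour_stable C lam P"
    and x: "x \<in> Obj C" and y: "y \<in> Obj C" and xy: "s0 C lam (lam0 C lam x) = s0 C lam (lam0 C lam y)"
    and "P x"
  shows "P y"
proof -
  let ?Q = "\<lambda>c. \<exists>z\<in>Obj C. lam (ident C z) = c \<and> P z"
  have P_ident: "P z \<longleftrightarrow> P z'" if "z \<in> Obj C" "z' \<in> Obj C" "lam (ident C z) = lam (ident C z')" for z z'
    using colour_stableD[OF P] category_ident[OF C] that by metis
  have "lam0 C lam y \<in> s0 C lam (lam0 C lam y)"
    using y unfolding s0_def sim0_def I0_def lam0_def by auto
  then have "(lam0 C lam x, lam0 C lam y) \<in> (rel0_base C lam \<union> (rel0_base C lam)\<inverse>)\<^sup>*"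
    using xy unfolding s0_def sim0_def by auto
  moreover have "?Q (lam0 C lam x)"
    using x \<open>P x\<close> unfolding lam0_def by blast
  ultimately have "?Q (lam0 C lam y)"
  proof (rule rtrancl_symcl_invariant)
    fix u v assume "(u, v) \<in> rel0_base C lam"
    then obtain a b where a: "a \<in> Mor C" and b: "b \<in> Mor C" and ab: "s1 C lam (lam a) = s1 C lam (lam b)"
      and "u = lam (ident C (dom C a))" "v = lam (ident C (dom C b))"
      unfolding rel0_base_def by blast
    moreover have "P (dom C a) \<longleftrightarrow> P (dom C b)"
      using colour_stable_s1[OF C P a b] colour_stable_s1[OF C P b a] ab by metis
    ultimately show "?Q u \<longleftrightarrow> ?Q v"
      using P_ident category_dom_cod_Obj[OF C] by metis
  qed
  then show ?thesis
    using P_ident y unfolding lam0_def by blast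
qed

lemma transport_incoming_colour:
  assumes mcg: "morphism_colored_groupoid C lam" and ic: "inverse_compatible C lam"
    and m: "m \<in> Mor C" and m': "m' \<in> Mor C" and colour: "lam m = lam m'"
    and g: "g \<in> Mor C" "cod C g = dom C m"
  obtains g' where "g' \<in> Mor C" "cod C g' = dom C m'" "lam g' = lam g"
proof -
  have G: "groupoid C" and C: "category C"
    using mcg unfolding morphism_colored_groupoid_def groupoid_def by auto
  define k where "k = ginv C g"
  have k: "k \<in> Mor C" "dom C k = cod C g" "cod C k = dom C g" "comp C g k = ident C (cod C g)"
    using is_inverse_ginv[OF G g(1)] unfolding k_def is_inverse_def by auto
  have mg: "comp C m g \<in> Mor C" "dom C (comp C m g) = dom C g"
    using category_comp[OF C g(1) m] g(2) by auto
  have "comp C (comp C m g) k = comp C m (comp C g k)"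
    using category_assoc[OF C k(1) g(1) m] g(2) k(3) by simp
  also have "\<dots> = m"
    using k(4) g(2) category_ident_left_right[OF C m] by simp
  finally have "lam m' = lam (comp C (comp C m g) k)"
    using colour by simp
  then obtain g1 g2 where g2: "g2 \<in> Mor C" "g1 \<in> Mor C" "dom C g1 = cod C g2"
      "m' = comp C g1 g2" "lam g2 = lam k"
    using mcg m' mg k unfolding morphism_colored_groupoid_def morphism_colored_def by metis
  have "dom C g2 = dom C m'"
    using category_comp[OF C g2(1,2,3)] g2(4) by simp
  moreover have "lam (ginv C g2) = lam g"
    using ic g2(1,5) k(1) ginv_ginv[OF G g(1)] unfolding inverse_compatible_def k_def by metis
  moreover have "ginv C g2 \<in> Mor C" "cod C (ginv C g2) = dom C g2"
    using is_inverse_ginv[OF G g2(1)] unfolding is_inverse_def by auto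
  ultimately show ?thesis
    using that by metis
qed

lemma colour_stable_incoming:
  assumes "morphism_colored_groupoid C lam" and "inverse_compatible C lam"
  shows "colour_stable C lam (\<lambda>y. \<exists>g\<in>Mor C. cod C g = y \<and> F (lam g))"
  unfolding colour_stable_def
  by (metis transport_incoming_colour[OF assms])

theorem proposition3p10:
  fixes C :: "('o, 'm) cat" and lam :: "'m \<Rightarrow> 'c" and f g :: 'm
  assumes "morphism_colored_groupoid C lam"
    and "inverse_compatible C lam"
    and "f \<in> Mor C" and "g \<in> Mor C"
    and "s0 C lam (lam0 C lam (dom C f)) = s0 C lam (lam0 C lam (cod C g))"
  shows "\<exists>f'\<in>Mor C. \<exists>g'\<in>Mor C. dom C f' = cod C g' \<and>
           s1 C lam (lam f) = s1 C lam (lam f') \<and> s1 C lam (lam g) = s1 C lam (lam g')"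
proof -
  let ?P = "\<lambda>y. \<exists>g'\<in>Mor C. cod C g' = y \<and> s1 C lam (lam g') = s1 C lam (lam g)"
  have C: "category C"
    using assms(1) unfolding morphism_colored_groupoid_def groupoid_def by blast
  have "?P (dom C f)"
  proof (rule colour_stable_s0[OF C colour_stable_incoming[OF assms(1,2)]])
    show "cod C g \<in> Obj C" "dom C f \<in> Obj C"
      using category_dom_cod_Obj[OF C] assms(3,4) by auto
    show "s0 C lam (lam0 C lam (cod C g)) = s0 C lam (lam0 C lam (dom C f))"
      using assms(5) by simp
    show "?P (cod C g)"
      using assms(4) by blast
  qed
  then show ?thesis
    using assms(3) by metis
qed

end
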